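(* Let $H_1,\dots,H_k$ be linear subspaces of $\mathbb{R}^n$ with $1\le\dim H_j\le n-2$ for $j=1,\dots,k$. The following statements are equivalent. (i) $H_1^\perp+\cdots+H_k^\perp=\mathbb{R}^n$, and $\{H_1^\perp,\dots,H_k^\perp\}$ cannot be partitioned into two nonempty subsets such that every subspace in one is orthogonal to every subspace in the other. (ii) If $E\subset S^{n-1}$ is nonempty and closed, and for each $j=1,\dots,k$ and each $x\in E$ we have $S^{n-1}\cap(H_j^\perp+x)\subset E$, then $E=S^{n-1}$. (iii) If $F\subset\mathbb{R}^n$ is closed and invariant under every rotation that fixes $H_j$, for each $j=1,\dots,k$, then $F$ is a union of spheres centered at the origin. (iv) If $K$ is a convex body in $\mathbb{R}^n$ that is rotationally symmetric with respect to $H_j$ for each $j=1,\dots,k$, then $K$ is a ball centered at the origin.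
   Context: $H^\perp$ is the orthogonal complement of $H$; $S^{n-1}$ is the unit sphere. A rotation fixing $H$ is an element of $SO(n)$ acting as the identity on $H$. A set $X$ is rotationally symmetric with respect to an $i$-dimensional subspace $H$ if for every $x\in H$, $X\cap(H^\perp+x)$ is a union of $(n-i-1)$-dimensional spheres each centered at $x$ (equivalently, $X$ is invariant under every element of $SO(n)$ fixing $H$ pointwise). A convex body is a compact convex set with nonempty interior. *)

theory Defs
  imports "HOL-Analysis.Analysis"
begin

definition rotation_fixing :: "(real^'n) set \<Rightarrow> (real^'n \<Rightarrow> real^'n) \<Rightarrow> bool" where
  "rotation_fixing H f \<longleftrightarrow>
     orthogonal_transformation f \<and> det (matrix f) = 1 \<and> (\<forall>x\<in>H. f x = x)"

definition orthogonal_subspaces :: "(real^'n) set \<Rightarrow> (real^'n) set \<Rightarrow> bool" where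
  "orthogonal_subspaces A B \<longleftrightarrow> (\<forall>u\<in>A. \<forall>v\<in>B. orthogonal u v)"

definition rot_symmetric :: "(real^'n) set \<Rightarrow> (real^'n) set \<Rightarrow> bool" where
  "rot_symmetric H X \<longleftrightarrow>
     (\<forall>x\<in>H. \<exists>R::real set.
        X \<inter> ((\<lambda>y. y + x) ` orthogonal_comp H) =
        (\<Union>r\<in>R. {y \<in> (\<lambda>y. y + x) ` orthogonal_comp H. dist y x = r}))"

definition convex_body :: "(real^'n) set \<Rightarrow> bool" where
  "convex_body K \<longleftrightarrow> compact K \<and> convex K \<and> interior K \<noteq> {}"

end

(*
  Reflections do all the work.  For (i) => (ii), the directions c whose reflection s_c preserves E
  form a cone N that is closed under (a, b) |-> s_a(b), since s_(s_a b) = s_a s_b s_a, and N contains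
  every orthogonal complement V_j of H_j.  A maximal subspace W inside N absorbs every vector of N
  that is not orthogonal to it (this is where dim V_j >= 2 enters), so each V_j lies in W or is
  orthogonal to W; irreducibility and spanning force W, hence N, to be everything, and the
  reflection along x - y moves a point x of E to an arbitrary point y of the sphere.
  For (ii) => (iii), a product of two reflections along vectors of V_j is a rotation fixing H_j, so
  the radial slices of a closed invariant set satisfy the hypothesis of (ii).  (iii) => (iv) holds
  because a rotationally symmetric body is invariant under these rotations, and a convex body that is
  a union of centred spheres is a ball.  For (iv) => (i), a failure of spanning yields a unit ball cut
  by a half-space orthogonal to a unit vector common to all H_j, and an orthogonal splitting yields
  the sum of balls of radii 1 and 2 in the two complementary subspaces.
*)

theory Submission
  imports Defs
begin

section \<open>Reflections\<close>

text \<open>Since division by zero yields zero, \<open>reflection 0\<close> is the identity.\<close>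
definition reflection :: "'a::real_inner \<Rightarrow> 'a \<Rightarrow> 'a" where
  "reflection a x = x - (2 * (x \<bullet> a) / (a \<bullet> a)) *\<^sub>R a"

lemma linear_reflection: "linear (reflection a)"
  unfolding reflection_def
  by (intro linearI) (auto simp: inner_add_left algebra_simps add_divide_distrib
      scaleR_add_left[symmetric] simp del: scaleR_add_left)

lemma inner_reflection [simp]: "reflection a x \<bullet> reflection a y = x \<bullet> y"
  by (cases "a = 0") (simp_all add: reflection_def inner_diff_left inner_diff_right inner_commute field_simps)

lemma orthogonal_transformation_reflection: "orthogonal_transformation (reflection a)"
  by (simp add: orthogonal_transformation_def linear_reflection)

lemma norm_reflection [simp]: "norm (reflection a x) = norm x"
  by (simp add: norm_eq_sqrt_inner)

lemma reflection_reflection [simp]: "reflection a (reflection a x) = x"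
  by (cases "a = 0") (simp_all add: reflection_def inner_diff_left algebra_simps field_simps)

lemma reflection_scaleR: "reflection (t *\<^sub>R a) x = (if t = 0 then x else reflection a x)"
  by (auto simp: reflection_def field_simps)

lemma reflection_orthogonal: "x \<bullet> a = 0 \<Longrightarrow> reflection a x = x"
  by (simp add: reflection_def)

lemma reflection_eq_diff: "2 * (b \<bullet> a) = a \<bullet> a \<Longrightarrow> reflection a b = b - a"
  by (cases "a = 0") (simp_all add: reflection_def)

lemma reflection_diff_swap:
  assumes "norm z = norm w" shows "reflection (z - w) z = w"
proof -
  have "z \<bullet> z = w \<bullet> w" using assms by (simp add: dot_square_norm)
  then have "2 * (z \<bullet> (z - w)) = (z - w) \<bullet> (z - w)"
    by (simp add: inner_diff_left inner_diff_right inner_commute)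
  then show ?thesis by (simp add: reflection_eq_diff)
qed

lemma reflection_commute_orthogonal_transformation:
  "orthogonal_transformation g \<Longrightarrow> g (reflection a x) = reflection (g a) (g x)"
  by (simp add: reflection_def orthogonal_transformation_def linear_diff linear_scale)

lemma reflection_reflection_conj:
  "reflection (reflection a b) x = reflection a (reflection b (reflection a x))"
  using reflection_commute_orthogonal_transformation[OF orthogonal_transformation_reflection,
      of a b "reflection a x"] by simp

lemma det_matrix_reflection_axis: "det (matrix (reflection (axis k 1) :: real^'n \<Rightarrow> real^'n)) = -1"
proof -
  have "matrix (reflection (axis k 1) :: real^'n \<Rightarrow> real^'n) $ i $ j =
      (if i = j then if i = k then -1 else 1 else 0)" for i j
    by (auto simp: matrix_def reflection_def inner_axis_axis) (auto simp: axis_def)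
  then have "det (matrix (reflection (axis k 1) :: real^'n \<Rightarrow> real^'n)) =
      (\<Prod>i\<in>UNIV. if i = k then -1 else 1)"
    by (subst det_diagonal) (auto intro!: prod.cong)
  then show ?thesis by simp
qed

text \<open>Every reflection is conjugate, by an orthogonal transformation, to one along a basis vector.\<close>
lemma det_matrix_reflection:
  fixes a :: "real^'n"
  assumes "a \<noteq> 0"
  shows "det (matrix (reflection a)) = -1"
proof -
  obtain k :: 'n where True by simp
  obtain g :: "real^'n \<Rightarrow> real^'n" where g: "orthogonal_transformation g" "g (axis k 1) = a /\<^sub>R norm a"
    using orthogonal_transformation_exists[of "axis k 1" "a /\<^sub>R norm a"] assms by auto
  have "reflection a \<circ> g = g \<circ> reflection (axis k 1)"
    using reflection_commute_orthogonal_transformation[OF g(1), of "axis k 1"] assms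
    by (simp add: fun_eq_iff g(2) reflection_scaleR)
  then have "matrix (reflection a) ** matrix g = matrix g ** matrix (reflection (axis k 1))"
    using g(1) by (simp add: matrix_compose linear_reflection orthogonal_transformation_linear flip: matrix_compose)
  then have "det (matrix (reflection a)) * det (matrix g) = -1 * det (matrix g)"
    by (metis det_mul det_matrix_reflection_axis mult.commute)
  moreover have "det (matrix g) \<noteq> 0"
    using orthogonal_transformation_det[OF g(1)] by auto
  ultimately show ?thesis by (metis mult_right_cancel)
qed

section \<open>Cones closed under reflections\<close>

lemma dim_orthogonal_comp:
  fixes H :: "'a::euclidean_space set"
  assumes "subspace H"
  shows "dim (H\<^sup>\<bottom>) + dim H = DIM('a)"
  using dim_subspace_orthogonal_to_vectors[OF assms subspace_UNIV subset_UNIV]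
  by (simp add: orthogonal_comp_def)

lemma subspace_obtain_nonzero_orthogonal:
  fixes V :: "'a::euclidean_space set"
  assumes V: "subspace V" "2 \<le> dim V"
  obtains e where "e \<in> V" "e \<noteq> 0" "e \<bullet> q = 0"
proof -
  have "0 < dim (V \<inter> {x. q \<bullet> x = 0})"
  proof (cases "q = 0")
    case True
    then show ?thesis using V by simp
  next
    case False
    have "dim {x + y |x y. x \<in> V \<and> y \<in> {x. q \<bullet> x = 0}} + dim (V \<inter> {x. q \<bullet> x = 0}) =
        dim V + dim {x. q \<bullet> x = 0}"
      by (rule dim_sums_Int[OF V(1) subspace_hyperplane])
    moreover have "dim {x + y |x y. x \<in> V \<and> y \<in> {x. q \<bullet> x = 0}} \<le> DIM('a)"
      by (rule dim_subset_UNIV)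
    moreover have "dim {x. q \<bullet> x = 0} = DIM('a) - 1"
      using False by (rule dim_hyperplane)
    ultimately show ?thesis using V(2) DIM_positive[where 'a='a] by linarith
  qed
  then have "\<not> V \<inter> {x. q \<bullet> x = 0} \<subseteq> {0}"
    using dim_eq_0 by (metis gr_implies_not0)
  then obtain e where "e \<in> V" "e \<noteq> 0" "q \<bullet> e = 0"
    by auto
  then show thesis using that by (simp add: inner_commute)
qed

lemma subspace_obtain_norm_inner:
  fixes W :: "'a::euclidean_space set"
  assumes W: "subspace W" "2 \<le> dim W" and q: "q \<in> W" "q \<noteq> 0" and c: "\<bar>c\<bar> \<le> \<tau> * norm q"
  obtains y where "y \<in> W" "norm y = \<tau>" "y \<bullet> q = c"
proof -
  obtain e0 where e0: "e0 \<in> W" "e0 \<noteq> 0" "e0 \<bullet> q = 0"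
    using subspace_obtain_nonzero_orthogonal[OF W] .
  define e where "e = e0 /\<^sub>R norm e0"
  have e: "e \<in> W" "e \<bullet> e = 1" "e \<bullet> q = 0"
    using e0 W(1) by (simp_all add: e_def subspace_scale dot_square_norm power2_eq_square)
  define \<beta> where "\<beta> = c / (q \<bullet> q)"
  have qq: "q \<bullet> q = (norm q)\<^sup>2" by (simp add: dot_square_norm)
  have "0 \<le> \<tau>" using c q(2) by (metis abs_ge_zero order_trans zero_le_mult_iff norm_le_zero_iff)
  have "\<beta>\<^sup>2 * (q \<bullet> q) = (c / norm q)\<^sup>2"
    using q(2) by (simp add: \<beta>_def qq power2_eq_square)
  also have "\<dots> \<le> \<tau>\<^sup>2"
    using c q(2) \<open>0 \<le> \<tau>\<close>
    by (simp add: abs_le_square_iff[symmetric] abs_divide pos_divide_le_eq)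
  finally have le: "\<beta>\<^sup>2 * (q \<bullet> q) \<le> \<tau>\<^sup>2" .
  define t where "t = sqrt (\<tau>\<^sup>2 - \<beta>\<^sup>2 * (q \<bullet> q))"
  define y where "y = \<beta> *\<^sub>R q + t *\<^sub>R e"
  have "y \<bullet> y = \<beta>\<^sup>2 * (q \<bullet> q) + t\<^sup>2"
    using e by (simp add: y_def inner_add_left inner_add_right inner_commute power2_eq_square algebra_simps)
  then have "norm y = \<tau>"
    using le \<open>0 \<le> \<tau>\<close> by (simp add: t_def norm_eq_sqrt_inner)
  moreover have "y \<bullet> q = c"
    using e q(2) by (simp add: y_def \<beta>_def inner_add_left)
  moreover have "y \<in> W"
    using W(1) q(1) e(1) by (simp add: y_def subspace_add subspace_scale)
  ultimately show thesis using that by blast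
qed

text \<open>For \<open>\<sigma> \<ge> 1\<close> the threshold \<open>\<bar>\<sigma>\<^sup>2 - 1\<bar> / (2 * \<sigma>)\<close> is at most \<open>\<sigma> / 2\<close>, so iterating the
  closure property halves the members of \<open>T\<close> down to \<open>1\<close>, whose threshold is \<open>0\<close>.\<close>
lemma nonneg_mem_if_closed_under_threshold:
  fixes T :: "real set"
  assumes step: "\<And>\<sigma> \<tau>. \<sigma> \<in> T \<Longrightarrow> 0 < \<sigma> \<Longrightarrow> \<bar>\<sigma>\<^sup>2 - 1\<bar> / (2 * \<sigma>) \<le> \<tau> \<Longrightarrow> \<tau> \<in> T"
    and \<sigma>: "\<sigma> \<in> T" "0 < \<sigma>" and "0 \<le> \<tau>"
  shows "\<tau> \<in> T"
proof -
  have halving: "1 \<in> T" if "\<sigma> \<in> T" "1 \<le> \<sigma>" "\<sigma> \<le> 2 ^ m" for \<sigma> m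
    using that
  proof (induction m arbitrary: \<sigma>)
    case 0
    then show ?case by simp
  next
    case (Suc m)
    have "\<bar>\<sigma>\<^sup>2 - 1\<bar> / (2 * \<sigma>) \<le> \<sigma>\<^sup>2 / (2 * \<sigma>)"
      using Suc.prems(2) by (intro divide_right_mono) (auto simp: one_le_power)
    also have "\<dots> \<le> 2 ^ m"
      using Suc.prems(2,3) by (simp add: power2_eq_square)
    finally have "\<bar>\<sigma>\<^sup>2 - 1\<bar> / (2 * \<sigma>) \<le> 2 ^ m" .
    moreover have "max (\<bar>\<sigma>\<^sup>2 - 1\<bar> / (2 * \<sigma>)) 1 \<in> T"
      by (rule step[OF Suc.prems(1)]) (use Suc.prems(2) in auto)
    ultimately show ?case
      using Suc.IH[of "max (\<bar>\<sigma>\<^sup>2 - 1\<bar> / (2 * \<sigma>)) 1"] by simp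
  qed
  define \<sigma>' where "\<sigma>' = max (\<bar>\<sigma>\<^sup>2 - 1\<bar> / (2 * \<sigma>)) 1"
  have "\<sigma>' \<in> T" using \<sigma> by (auto simp: \<sigma>'_def intro: step)
  moreover obtain m where "\<sigma>' \<le> 2 ^ m"
    using real_arch_pow[of 2 \<sigma>'] by (auto intro: less_imp_le)
  ultimately have "1 \<in> T" by (auto simp: \<sigma>'_def intro: halving)
  then show ?thesis using step[of 1 \<tau>] \<open>0 \<le> \<tau>\<close> by simp
qed

lemma obtain_maximal_subspace:
  fixes N :: "'a::euclidean_space set"
  assumes "subspace V" "V \<subseteq> N"
  obtains W where "subspace W" "V \<subseteq> W" "W \<subseteq> N"
    "\<And>W'. subspace W' \<Longrightarrow> W \<subseteq> W' \<Longrightarrow> W' \<subseteq> N \<Longrightarrow> W' = W"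
proof -
  define P where "P W \<longleftrightarrow> subspace W \<and> V \<subseteq> W \<and> W \<subseteq> N" for W
  have "P V" using assms by (simp add: P_def)
  moreover have "\<forall>W. P W \<longrightarrow> dim W < DIM('a) + 1"
    using dim_subset_UNIV[where 'a='a] by (simp add: less_Suc_eq_le)
  ultimately obtain W where W: "P W" and greatest: "\<And>W'. P W' \<Longrightarrow> dim W' \<le> dim W"
    using ex_has_greatest_nat[of P V dim] by blast
  show thesis
  proof (rule that)
    show "subspace W" "V \<subseteq> W" "W \<subseteq> N" using W by (simp_all add: P_def)
    fix W' assume W': "subspace W'" "W \<subseteq> W'" "W' \<subseteq> N"
    then have "dim W' \<le> dim W" using W by (intro greatest) (auto simp: P_def)
    then show "W' = W" using subspace_dim_equal[OF _ W'(1,2)] W by (simp add: P_def)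
  qed
qed

definition orthogonally_decomposable :: "'i set \<Rightarrow> ('i \<Rightarrow> 'a::real_inner set) \<Rightarrow> bool" where
  "orthogonally_decomposable J V \<longleftrightarrow>
     (\<exists>I I'. I \<union> I' = J \<and> I \<inter> I' = {} \<and> I \<noteq> {} \<and> I' \<noteq> {} \<and>
        (\<forall>i\<in>I. \<forall>j\<in>I'. \<forall>u\<in>V i. \<forall>v\<in>V j. orthogonal u v))"

locale reflection_cone =
  fixes N :: "'a::euclidean_space set"
  assumes scaleR_mem: "c \<in> N \<Longrightarrow> t *\<^sub>R c \<in> N"
    and reflection_mem: "a \<in> N \<Longrightarrow> b \<in> N \<Longrightarrow> reflection a b \<in> N"
begin

lemma mem_if_norm_eq: "a \<in> N \<Longrightarrow> a - b \<in> N \<Longrightarrow> norm a = norm b \<Longrightarrow> b \<in> N"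
  by (metis reflection_mem reflection_diff_swap)

lemma diff_mem: "a \<in> N \<Longrightarrow> b \<in> N \<Longrightarrow> 2 * (b \<bullet> a) = a \<bullet> a \<Longrightarrow> a - b \<in> N"
  by (metis reflection_mem reflection_eq_diff scaleR_mem minus_diff_eq scaleR_minus1_left)

lemma plus_subspace_mem:
  assumes W: "subspace W" "W \<subseteq> N" "2 \<le> dim W"
    and u: "norm u = 1" "\<And>q. q \<in> W \<Longrightarrow> u \<bullet> q = 0"
    and p: "p \<in> W" "p \<noteq> 0" "u + p \<in> N"
    and q: "q \<in> W"
  shows "u + q \<in> N"
proof -
  have uu: "u \<bullet> u = 1" using u(1) by (simp add: dot_square_norm)
  then have norm_sq: "(norm (u + q))\<^sup>2 = 1 + (norm q)\<^sup>2" if "q \<in> W" for q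
    using u(2) that by (simp add: power2_norm_eq_inner inner_add_left inner_add_right inner_commute)
  have equal_norm: "u + q' \<in> N" if "q \<in> W" "q' \<in> W" "norm q = norm q'" "u + q \<in> N" for q q'
  proof (rule mem_if_norm_eq)
    show "u + q \<in> N" by fact
    show "(u + q) - (u + q') \<in> N" using that W by (auto intro: subspace_diff)
    show "norm (u + q) = norm (u + q')"
      using norm_sq that by (metis norm_ge_zero power2_eq_imp_eq)
  qed
  txt \<open>Reflecting \<open>q - y\<close> along \<open>u + q\<close> gives \<open>-(u + y)\<close>; with \<open>y\<close> chosen suitably this turns a
    norm \<open>\<sigma>\<close> in \<open>T\<close> into every norm of at least \<open>\<bar>\<sigma>\<^sup>2 - 1\<bar> / (2 * \<sigma>)\<close>.\<close>
  define T where "T = {\<sigma>. \<exists>q\<in>W. norm q = \<sigma> \<and> u + q \<in> N}"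
  have "\<tau> \<in> T" if \<sigma>: "\<sigma> \<in> T" "0 < \<sigma>" "\<bar>\<sigma>\<^sup>2 - 1\<bar> / (2 * \<sigma>) \<le> \<tau>" for \<sigma> \<tau>
  proof -
    obtain q where q: "q \<in> W" "norm q = \<sigma>" "u + q \<in> N" using \<sigma>(1) by (auto simp: T_def)
    have bound: "\<bar>(\<sigma>\<^sup>2 - 1) / 2\<bar> \<le> \<tau> * norm q"
      using \<sigma>(2,3) q(2) by (simp add: pos_divide_le_eq mult_ac)
    moreover have "q \<noteq> 0" using q(2) \<sigma>(2) by auto
    ultimately obtain y where y: "y \<in> W" "norm y = \<tau>" "y \<bullet> q = (\<sigma>\<^sup>2 - 1) / 2"
      using subspace_obtain_norm_inner[OF W(1,3) q(1)] by blast
    have qq: "q \<bullet> q = \<sigma>\<^sup>2" using q(2) by (simp add: dot_square_norm)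
    have "2 * ((q - y) \<bullet> (u + q)) = 2 * (q \<bullet> q - y \<bullet> q)"
      using u(2)[OF q(1)] u(2)[OF y(1)]
      by (simp add: inner_diff_left inner_diff_right inner_add_left inner_add_right inner_commute)
    also have "\<dots> = 1 + q \<bullet> q" using y(3) qq by (simp add: field_simps)
    also have "\<dots> = (u + q) \<bullet> (u + q)"
      using u(2)[OF q(1)] uu by (simp add: inner_add_left inner_add_right inner_commute)
    finally have "2 * ((q - y) \<bullet> (u + q)) = (u + q) \<bullet> (u + q)" .
    moreover have "q - y \<in> N" using q(1) y(1) W by (auto intro: subspace_diff)
    ultimately have "(u + q) - (q - y) \<in> N" using q(3) diff_mem by blast
    then show "\<tau> \<in> T" using y by (auto simp: T_def)
  qed
  then have "norm q \<in> T"
    by (rule nonneg_mem_if_closed_under_threshold[of T "norm p"]) (use p in \<open>auto simp: T_def\<close>)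
  then show ?thesis using equal_norm q by (auto simp: T_def)
qed

lemma span_insert_subset:
  assumes W: "subspace W" "W \<subseteq> N" "2 \<le> dim W"
    and w: "w \<in> N" "a \<in> W" "w \<bullet> a \<noteq> 0"
  shows "span (insert w W) \<subseteq> N"
proof -
  obtain p h where p: "p \<in> W" and h: "\<And>y. y \<in> W \<Longrightarrow> orthogonal h y" and w_eq: "w = p + h"
    using orthogonal_subspace_decomp_exists[of W w] W(1) by (metis span_eq_iff)
  have "p \<noteq> 0" using w(3) h[OF w(2)] by (auto simp: w_eq inner_add_left orthogonal_def)
  show ?thesis
  proof (cases "h = 0")
    case True
    then have "span (insert w W) = W" using p w_eq W(1) by (simp add: insert_absorb)
    then show ?thesis using W(2) by simp
  next
    case False
    define u where "u = h /\<^sub>R norm h"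
    have u: "norm u = 1" "\<And>q. q \<in> W \<Longrightarrow> u \<bullet> q = 0"
      using False h by (auto simp: u_def orthogonal_def)
    have "u + p /\<^sub>R norm h = w /\<^sub>R norm h"
      using False by (simp add: u_def w_eq algebra_simps)
    then have "u + p /\<^sub>R norm h \<in> N" using scaleR_mem w(1) by metis
    then have translate: "u + q \<in> N" if "q \<in> W" for q
      using plus_subspace_mem[OF W u, of "p /\<^sub>R norm h"] p \<open>p \<noteq> 0\<close> False W(1) that
      by (simp add: subspace_scale)
    show ?thesis
    proof
      fix x assume "x \<in> span (insert w W)"
      then obtain c where b: "x - c *\<^sub>R w \<in> W"
        using span_eq_iff[THEN iffD2, OF W(1)] by (auto simp: span_insert)
      show "x \<in> N"
      proof (cases "c = 0")
        case True
        then show ?thesis using b W(2) by auto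
      next
        case c: False
        define q where "q = (c *\<^sub>R p + (x - c *\<^sub>R w)) /\<^sub>R (c * norm h)"
        have "q \<in> W" using W(1) p b by (simp add: q_def subspace_add subspace_scale)
        moreover have "x = (c * norm h) *\<^sub>R (u + q)"
          using c False by (simp add: q_def u_def w_eq algebra_simps)
        ultimately show ?thesis using translate scaleR_mem by metis
      qed
    qed
  qed
qed

lemma maximal_subspace_subset_or_orthogonal:
  assumes W: "subspace W" "W \<subseteq> N" "2 \<le> dim W"
    and maximal: "\<And>W'. subspace W' \<Longrightarrow> W \<subseteq> W' \<Longrightarrow> W' \<subseteq> N \<Longrightarrow> W' = W"
    and V: "subspace V" "V \<subseteq> N"
  shows "V \<subseteq> W \<or> (\<forall>v\<in>V. \<forall>a\<in>W. orthogonal v a)"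
proof -
  have absorb: "w \<in> W" if "w \<in> N" "a \<in> W" "w \<bullet> a \<noteq> 0" for w a
  proof -
    have "W \<subseteq> span (insert w W)" by (meson span_superset subset_insertI order_trans)
    then have "span (insert w W) = W"
      by (rule maximal[OF subspace_span _ span_insert_subset[OF W that]])
    then show ?thesis by (metis insertI1 span_superset subsetD)
  qed
  show ?thesis
  proof (rule disjCI)
    assume "\<not> (\<forall>v\<in>V. \<forall>a\<in>W. orthogonal v a)"
    then obtain v0 a where v0: "v0 \<in> V" "a \<in> W" "v0 \<bullet> a \<noteq> 0" by (auto simp: orthogonal_def)
    show "V \<subseteq> W"
    proof
      fix v assume v: "v \<in> V"
      consider "v \<bullet> a \<noteq> 0" | "(v + v0) \<bullet> a \<noteq> 0"
        using v0(3) by (metis add_0 inner_add_left)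
      then show "v \<in> W"
      proof cases
        case 1
        with v V(2) show ?thesis by (intro absorb[OF _ v0(2)]) auto
      next
        case 2
        have "v + v0 \<in> V" using V(1) v v0(1) by (rule subspace_add)
        with 2 have "v + v0 \<in> W" using V(2) by (intro absorb[OF _ v0(2)]) auto
        moreover have "v0 \<in> W" using v0 V(2) by (intro absorb[OF _ v0(2)]) auto
        ultimately show ?thesis by (metis W(1) add_diff_cancel_right' subspace_diff)
      qed
    qed
  qed
qed

lemma eq_UNIV:
  assumes V: "\<And>j. j \<in> J \<Longrightarrow> subspace (V j)" "\<And>j. j \<in> J \<Longrightarrow> V j \<subseteq> N"
      "\<And>j. j \<in> J \<Longrightarrow> 2 \<le> dim (V j)"
    and spanning: "span (\<Union>j\<in>J. V j) = UNIV"
    and irreducible: "\<not> orthogonally_decomposable J V"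
  shows "N = UNIV"
proof -
  have "J \<noteq> {}"
  proof
    assume "J = {}"
    then have "(SOME b::'a. b \<in> Basis) = 0" using spanning by auto
    then show False using SOME_Basis nonzero_Basis by metis
  qed
  then obtain j0 where j0: "j0 \<in> J" by blast
  obtain W where Wsub: "subspace W" "V j0 \<subseteq> W" "W \<subseteq> N"
    and maximal: "\<And>W'. subspace W' \<Longrightarrow> W \<subseteq> W' \<Longrightarrow> W' \<subseteq> N \<Longrightarrow> W' = W"
    using obtain_maximal_subspace[OF V(1,2)[OF j0]] by metis
  have W2: "2 \<le> dim W" using V(3)[OF j0] dim_subset[OF Wsub(2)] by linarith
  define I where "I = {j \<in> J. V j \<subseteq> W}"
  have orth: "\<forall>v\<in>V j. \<forall>a\<in>W. orthogonal v a" if j: "j \<in> J - I" for j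
    using maximal_subspace_subset_or_orthogonal[OF Wsub(1,3) W2 maximal V(1,2)] j
    by (auto simp: I_def)
  have "J - I = {}"
  proof (rule ccontr)
    assume "J - I \<noteq> {}"
    moreover have "I \<noteq> {}" using j0 Wsub(2) by (auto simp: I_def)
    moreover have "\<forall>i\<in>I. \<forall>j\<in>J - I. \<forall>u\<in>V i. \<forall>v\<in>V j. orthogonal u v"
    proof (intro ballI)
      fix i j u v assume "i \<in> I" "j \<in> J - I" "u \<in> V i" "v \<in> V j"
      then show "orthogonal u v"
        using orth[OF \<open>j \<in> J - I\<close>] by (metis I_def mem_Collect_eq orthogonal_commute subsetD)
    qed
    ultimately have "orthogonally_decomposable J V"
      unfolding orthogonally_decomposable_def by (intro exI[of _ I] exI[of _ "J - I"]) (auto simp: I_def)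
    then show False using irreducible by blast
  qed
  then have "span (\<Union>j\<in>J. V j) \<subseteq> W" using Wsub(1) by (intro span_minimal) (auto simp: I_def)
  then show ?thesis using spanning Wsub(3) by auto
qed

end

definition saturated_sphere_subsets_trivial :: "'i set \<Rightarrow> ('i \<Rightarrow> 'a::real_normed_vector set) \<Rightarrow> bool" where
  "saturated_sphere_subsets_trivial J V \<longleftrightarrow>
     (\<forall>E. E \<subseteq> sphere 0 1 \<and> E \<noteq> {} \<and> closed E \<and>
        (\<forall>j\<in>J. \<forall>x\<in>E. sphere 0 1 \<inter> (\<lambda>y. y + x) ` V j \<subseteq> E) \<longrightarrow> E = sphere 0 1)"

lemma saturated_sphere_subsets_trivial_if_irreducible:
  fixes V :: "'i \<Rightarrow> 'a::euclidean_space set"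
  assumes V: "\<And>j. j \<in> J \<Longrightarrow> subspace (V j)" "\<And>j. j \<in> J \<Longrightarrow> 2 \<le> dim (V j)"
    and spanning: "span (\<Union>j\<in>J. V j) = UNIV"
    and irreducible: "\<not> orthogonally_decomposable J V"
  shows "saturated_sphere_subsets_trivial J V"
  unfolding saturated_sphere_subsets_trivial_def
proof (intro allI impI, elim conjE)
  fix E :: "'a set"
  assume E: "E \<subseteq> sphere 0 1" "E \<noteq> {}"
    and saturated: "\<forall>j\<in>J. \<forall>x\<in>E. sphere 0 1 \<inter> (\<lambda>y. y + x) ` V j \<subseteq> E"
  define N where "N = {c. \<forall>x\<in>E. reflection c x \<in> E}"
  interpret reflection_cone N
    by unfold_locales (auto simp: N_def reflection_scaleR reflection_reflection_conj)
  have "V j \<subseteq> N" if j: "j \<in> J" for j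
  proof
    fix a assume a: "a \<in> V j"
    have "reflection a x \<in> E" if x: "x \<in> E" for x
    proof -
      have "reflection a x = (- (2 * (x \<bullet> a) / (a \<bullet> a))) *\<^sub>R a + x"
        by (simp add: reflection_def)
      moreover have "(- (2 * (x \<bullet> a) / (a \<bullet> a))) *\<^sub>R a \<in> V j"
        by (rule subspace_scale[OF V(1)[OF j] a])
      moreover have "reflection a x \<in> sphere 0 1" using x E(1) by auto
      ultimately show ?thesis using saturated j x by blast
    qed
    then show "a \<in> N" by (simp add: N_def)
  qed
  then have "N = UNIV" using eq_UNIV V spanning irreducible by blast
  obtain x0 where x0: "x0 \<in> E" using E(2) by blast
  have "y \<in> E" if y: "y \<in> sphere 0 1" for y
  proof -
    have "reflection (x0 - y) x0 = y" using x0 y E(1) by (intro reflection_diff_swap) auto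
    moreover have "x0 - y \<in> N" using \<open>N = UNIV\<close> by simp
    ultimately show ?thesis using x0 by (metis (no_types, lifting) N_def mem_Collect_eq)
  qed
  then show "E = sphere 0 1" using E(1) by auto
qed

section \<open>Rotations fixing a subspace\<close>

lemma rotation_fixing_id: "rotation_fixing H id"
  by (simp add: rotation_fixing_def orthogonal_transformation_id[folded id_def] matrix_id_mat_1)

lemma rotation_fixing_reflection_comp:
  fixes a b :: "real^'n"
  assumes "a \<in> H\<^sup>\<bottom>" "b \<in> H\<^sup>\<bottom>" "a \<noteq> 0" "b \<noteq> 0"
  shows "rotation_fixing H (reflection b \<circ> reflection a)"
proof -
  have "det (matrix (reflection b \<circ> reflection a)) = 1"
    using assms(3,4) by (simp add: matrix_compose linear_reflection det_mul det_matrix_reflection)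
  moreover have "reflection b (reflection a x) = x" if "x \<in> H" for x
  proof -
    have "x \<bullet> a = 0" "x \<bullet> b = 0"
      using assms(1,2) that by (auto simp: orthogonal_comp_def orthogonal_def)
    then show ?thesis by (simp add: reflection_orthogonal)
  qed
  ultimately show ?thesis
    by (simp add: rotation_fixing_def orthogonal_transformation_compose orthogonal_transformation_reflection)
qed

lemma rotation_fixing_exists:
  fixes H :: "(real^'n) set"
  assumes H: "2 \<le> dim (H\<^sup>\<bottom>)" and y: "y \<in> H\<^sup>\<bottom>" and norm_eq: "norm z = norm (y + z)"
  obtains f where "rotation_fixing H f" "f z = y + z"
proof (cases "y = 0")
  case True
  then show thesis using that rotation_fixing_id by fastforce
next
  case False
  obtain b where b: "b \<in> H\<^sup>\<bottom>" "b \<noteq> 0" "b \<bullet> (y + z) = 0"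
    using subspace_obtain_nonzero_orthogonal[OF subspace_orthogonal_comp H] .
  have "z - (y + z) \<in> H\<^sup>\<bottom>" using y by (simp add: subspace_neg subspace_orthogonal_comp)
  then have "rotation_fixing H (reflection b \<circ> reflection (z - (y + z)))"
    using b False by (intro rotation_fixing_reflection_comp) auto
  moreover have "reflection (z - (y + z)) z = y + z" by (rule reflection_diff_swap[OF norm_eq])
  moreover have "reflection b (y + z) = y + z" using b(3) by (simp add: reflection_orthogonal inner_commute)
  ultimately show thesis using that by simp
qed

lemma sphere_slice_saturated:
  fixes H F :: "(real^'n) set"
  assumes H: "2 \<le> dim (H\<^sup>\<bottom>)" and F: "\<And>f. rotation_fixing H f \<Longrightarrow> f ` F = F"
    and x: "x \<in> sphere 0 1" "\<rho> *\<^sub>R x \<in> F"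
  shows "sphere 0 1 \<inter> (\<lambda>y. y + x) ` (H\<^sup>\<bottom>) \<subseteq> {z \<in> sphere 0 1. \<rho> *\<^sub>R z \<in> F}"
proof
  fix w assume w: "w \<in> sphere 0 1 \<inter> (\<lambda>y. y + x) ` (H\<^sup>\<bottom>)"
  then obtain y where y: "y \<in> H\<^sup>\<bottom>" "w = y + x" by auto
  have "norm x = norm (y + x)" using w x(1) y(2) by simp
  then obtain f where f: "rotation_fixing H f" "f x = y + x"
    using rotation_fixing_exists[OF H y(1)] by blast
  have "f (\<rho> *\<^sub>R x) = \<rho> *\<^sub>R w"
    using f y(2) by (simp add: rotation_fixing_def orthogonal_transformation_linear linear_scale)
  then have "\<rho> *\<^sub>R w \<in> f ` F" using x(2) by (metis imageI)
  then show "w \<in> {z \<in> sphere 0 1. \<rho> *\<^sub>R z \<in> F}" using w F[OF f(1)] by simp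
qed

definition invariant_closed_sets_radial :: "'i set \<Rightarrow> ('i \<Rightarrow> (real^'n) set) \<Rightarrow> bool" where
  "invariant_closed_sets_radial J H \<longleftrightarrow>
     (\<forall>F. closed F \<and> (\<forall>j\<in>J. \<forall>f. rotation_fixing (H j) f \<longrightarrow> f ` F = F) \<longrightarrow>
        (\<exists>R::real set. F = (\<Union>r\<in>R. sphere 0 r)))"

lemma invariant_closed_sets_radial_if_saturated_trivial:
  fixes H :: "'i \<Rightarrow> (real^'n) set"
  assumes H: "\<And>j. j \<in> J \<Longrightarrow> 2 \<le> dim ((H j)\<^sup>\<bottom>)"
    and trivial: "saturated_sphere_subsets_trivial J (\<lambda>j. (H j)\<^sup>\<bottom>)"
  shows "invariant_closed_sets_radial J H"
  unfolding invariant_closed_sets_radial_def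
proof (intro allI impI, elim conjE)
  fix F :: "(real^'n) set"
  assume F: "closed F" "\<forall>j\<in>J. \<forall>f. rotation_fixing (H j) f \<longrightarrow> f ` F = F"
  have "y \<in> F" if x: "x \<in> F" and y: "norm y = norm x" for x y
  proof (cases "x = 0")
    case True
    then show ?thesis using x y by simp
  next
    case False
    define E where "E = {z \<in> sphere 0 1. norm x *\<^sub>R z \<in> F}"
    have "E \<subseteq> sphere 0 1" by (auto simp: E_def)
    moreover have "E \<noteq> {}" using x False by (auto simp: E_def intro!: exI[of _ "x /\<^sub>R norm x"])
    moreover have "E = sphere 0 1 \<inter> (\<lambda>z. norm x *\<^sub>R z) -` F" by (auto simp: E_def)
    then have "closed E"
      using F(1) by (simp add: closed_Int continuous_closed_vimage continuous_intros)
    moreover have "sphere 0 1 \<inter> (\<lambda>y. y + z) ` ((H j)\<^sup>\<bottom>) \<subseteq> E" if "j \<in> J" "z \<in> E" for j z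
      using that F(2) unfolding E_def by (intro sphere_slice_saturated[OF H[OF \<open>j \<in> J\<close>]]) auto
    ultimately have "E = sphere 0 1"
      using trivial[unfolded saturated_sphere_subsets_trivial_def, rule_format, of E] by blast
    then have "y /\<^sub>R norm x \<in> E" using y False by simp
    then show "y \<in> F" using False by (simp add: E_def)
  qed
  then have "F = (\<Union>r\<in>norm ` F. sphere 0 r)" by auto
  then show "\<exists>R::real set. F = (\<Union>r\<in>R. sphere 0 r)" by blast
qed

section \<open>Rotationally symmetric convex bodies\<close>

lemma rot_symmetric_iff:
  "rot_symmetric H K \<longleftrightarrow>
    (\<forall>x\<in>H. \<forall>v\<in>H\<^sup>\<bottom>. \<forall>v'\<in>H\<^sup>\<bottom>. norm v = norm v' \<longrightarrow> v + x \<in> K \<longrightarrow> v' + x \<in> K)"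
proof
  assume sym: "rot_symmetric H K"
  show "\<forall>x\<in>H. \<forall>v\<in>H\<^sup>\<bottom>. \<forall>v'\<in>H\<^sup>\<bottom>. norm v = norm v' \<longrightarrow> v + x \<in> K \<longrightarrow> v' + x \<in> K"
  proof (intro ballI impI)
    fix x v v' assume x: "x \<in> H" and v: "v \<in> H\<^sup>\<bottom>" "v' \<in> H\<^sup>\<bottom>" "norm v = norm v'" "v + x \<in> K"
    obtain R where R: "K \<inter> (\<lambda>y. y + x) ` (H\<^sup>\<bottom>) = (\<Union>r\<in>R. {y \<in> (\<lambda>y. y + x) ` (H\<^sup>\<bottom>). dist y x = r})"
      using sym x by (auto simp: rot_symmetric_def)
    have "v + x \<in> (\<Union>r\<in>R. {y \<in> (\<lambda>y. y + x) ` (H\<^sup>\<bottom>). dist y x = r})"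
      using R v by blast
    then have "norm v \<in> R" by (auto simp: dist_norm)
    then have "v' + x \<in> (\<Union>r\<in>R. {y \<in> (\<lambda>y. y + x) ` (H\<^sup>\<bottom>). dist y x = r})"
      using v by (auto simp: dist_norm)
    then show "v' + x \<in> K" using R by blast
  qed
next
  assume slice: "\<forall>x\<in>H. \<forall>v\<in>H\<^sup>\<bottom>. \<forall>v'\<in>H\<^sup>\<bottom>. norm v = norm v' \<longrightarrow> v + x \<in> K \<longrightarrow> v' + x \<in> K"
  show "rot_symmetric H K"
    unfolding rot_symmetric_def
  proof
    fix x assume x: "x \<in> H"
    let ?S = "(\<lambda>y. y + x) ` (H\<^sup>\<bottom>)"
    have "K \<inter> ?S = (\<Union>r\<in>dist x ` (K \<inter> ?S). {y \<in> ?S. dist y x = r})"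
      using slice x by (fastforce simp: dist_norm)
    then show "\<exists>R. K \<inter> ?S = (\<Union>r\<in>R. {y \<in> ?S. dist y x = r})" by blast
  qed
qed

lemma rot_symmetric_image_subset:
  fixes H K :: "(real^'n) set"
  assumes H: "subspace H" and sym: "rot_symmetric H K"
    and f: "orthogonal_transformation f" "\<And>x. x \<in> H \<Longrightarrow> f x = x"
  shows "f ` K \<subseteq> K"
proof
  fix z assume "z \<in> f ` K"
  then obtain y where y: "y \<in> K" "z = f y" by blast
  have "y \<in> H + H\<^sup>\<bottom>" using subspace_sum_orthogonal_comp[OF H] by simp
  then obtain x v where "y = x + v" and x: "x \<in> H" and v: "v \<in> H\<^sup>\<bottom>"
    by (rule set_plus_elim)
  then have y_eq: "y = v + x" by (simp add: add.commute)
  have "y \<bullet> f v = 0" if "y \<in> H" for y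
  proof -
    have "y \<bullet> f v = f y \<bullet> f v" using f(2)[OF that] by simp
    also have "\<dots> = y \<bullet> v" using f(1) by (simp add: orthogonal_transformation_def)
    also have "\<dots> = 0" using v that by (simp add: orthogonal_comp_def orthogonal_def)
    finally show ?thesis .
  qed
  then have fv: "f v \<in> H\<^sup>\<bottom>" by (simp add: orthogonal_comp_def orthogonal_def)
  have "norm v = norm (f v)"
    using f(1) by (simp add: orthogonal_transformation_norm)
  moreover have "v + x \<in> K" using y(1) y_eq by simp
  ultimately have "f v + x \<in> K"
    using sym x v fv unfolding rot_symmetric_iff by blast
  moreover have "f y = f v + x"
    using y_eq f(2)[OF x] orthogonal_transformation_linear[OF f(1)] by (simp add: linear_add)
  ultimately show "z \<in> K" using y(2) by simp
qed

lemma rot_symmetric_image_eq: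
  fixes H K :: "(real^'n) set"
  assumes H: "subspace H" and sym: "rot_symmetric H K" and f: "rotation_fixing H f"
  shows "f ` K = K"
proof
  have f': "orthogonal_transformation f" "\<And>x. x \<in> H \<Longrightarrow> f x = x"
    using f by (auto simp: rotation_fixing_def)
  then show "f ` K \<subseteq> K" by (rule rot_symmetric_image_subset[OF H sym])
  have "inv f x = x" if "x \<in> H" for x
    using f' that by (metis orthogonal_transformation_inj inv_f_f)
  then have "inv f ` K \<subseteq> K"
    using f' by (intro rot_symmetric_image_subset[OF H sym]) (auto intro: orthogonal_transformation_inv)
  then have "f ` (inv f ` K) \<subseteq> f ` K" by (rule image_mono)
  then show "K \<subseteq> f ` K"
    using orthogonal_transformation_surj[OF f'(1)] by (simp add: image_image surj_f_inv_f)
qed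

lemma convex_body_union_spheres_eq_cball:
  fixes K :: "(real^'n) set"
  assumes K: "convex_body K" and spheres: "K = (\<Union>r\<in>R. sphere 0 r)"
  obtains r where "r > 0" "K = cball 0 r"
proof -
  have K': "compact K" "convex K" "interior K \<noteq> {}" using K by (auto simp: convex_body_def)
  then have "K \<noteq> {}" using interior_subset by blast
  then obtain x0 where x0: "x0 \<in> K" "\<And>y. y \<in> K \<Longrightarrow> norm y \<le> norm x0"
    using continuous_attains_sup[OF K'(1), of norm] continuous_on_norm_id by blast
  define r where "r = norm x0"
  have sphere_sub: "sphere 0 r \<subseteq> K" using x0(1) spheres by (auto simp: r_def)
  have "r > 0"
  proof (rule ccontr)
    assume "\<not> r > 0"
    then have "K \<subseteq> {0}" using x0(2) by (force simp: r_def)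
    then show False using K'(3) interior_mono[of K "{0}"] by auto
  qed
  have "cball 0 r \<subseteq> K"
  proof
    fix x :: "real^'n" assume x: "x \<in> cball 0 r"
    obtain d :: "real^'n" where d: "norm d = 1" "x = norm x *\<^sub>R d"
    proof (cases "x = 0")
      case True
      obtain i :: 'n where True by simp
      show ?thesis by (rule that[of "axis i 1"]) (simp_all add: True)
    next
      case False
      show ?thesis by (rule that[of "x /\<^sub>R norm x"]) (simp_all add: False)
    qed
    define l where "l = (1 + norm x / r) / 2"
    have l: "0 \<le> l" "l \<le> 1" using x \<open>r > 0\<close> by (auto simp: l_def field_simps)
    have "r *\<^sub>R d \<in> K" "(- r) *\<^sub>R d \<in> K" using sphere_sub d(1) \<open>r > 0\<close> by auto
    then have "l *\<^sub>R (r *\<^sub>R d) + (1 - l) *\<^sub>R ((- r) *\<^sub>R d) \<in> K"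
      using l by (intro convexD[OF K'(2)]) auto
    moreover have "l *\<^sub>R (r *\<^sub>R d) + (1 - l) *\<^sub>R ((- r) *\<^sub>R d) = (l * r + (1 - l) * (- r)) *\<^sub>R d"
      by (simp only: scaleR_scaleR scaleR_add_left)
    moreover have "l * r + (1 - l) * (- r) = norm x" using \<open>r > 0\<close> by (simp add: l_def field_simps)
    ultimately show "x \<in> K" using d(2) by simp
  qed
  moreover have "K \<subseteq> cball 0 r" using x0(2) by (auto simp: r_def)
  ultimately show thesis using that \<open>r > 0\<close> by blast
qed

definition symmetric_convex_bodies_balls :: "'i set \<Rightarrow> ('i \<Rightarrow> (real^'n) set) \<Rightarrow> bool" where
  "symmetric_convex_bodies_balls J H \<longleftrightarrow>
     (\<forall>K. convex_body K \<and> (\<forall>j\<in>J. rot_symmetric (H j) K) \<longrightarrow> (\<exists>r>0. K = cball 0 r))"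

lemma symmetric_convex_bodies_balls_if_radial:
  fixes H :: "'i \<Rightarrow> (real^'n) set"
  assumes H: "\<And>j. j \<in> J \<Longrightarrow> subspace (H j)" and radial: "invariant_closed_sets_radial J H"
  shows "symmetric_convex_bodies_balls J H"
  unfolding symmetric_convex_bodies_balls_def
proof (intro allI impI, elim conjE)
  fix K :: "(real^'n) set" assume K: "convex_body K" "\<forall>j\<in>J. rot_symmetric (H j) K"
  have "closed K" using K(1) by (simp add: convex_body_def compact_imp_closed)
  moreover have "\<forall>j\<in>J. \<forall>f. rotation_fixing (H j) f \<longrightarrow> f ` K = K"
  proof (intro ballI allI impI)
    fix j f assume "j \<in> J" "rotation_fixing (H j) f"
    then show "f ` K = K" using K(2) rot_symmetric_image_eq[OF H] by blast
  qed
  ultimately obtain R where "K = (\<Union>r\<in>R. sphere 0 r)"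
    using radial[unfolded invariant_closed_sets_radial_def, rule_format, of K] by blast
  then obtain r where "r > 0" "K = cball 0 r" by (rule convex_body_union_spheres_eq_cball[OF K(1)])
  then show "\<exists>r>0. K = cball 0 r" by blast
qed

lemma norm_add_orthogonal_eq:
  fixes x v v' :: "'a::real_inner"
  assumes "x \<bullet> v = 0" "x \<bullet> v' = 0" "norm v = norm v'"
  shows "norm (x + v) = norm (x + v')"
proof -
  have "(norm (x + v))\<^sup>2 = (norm x)\<^sup>2 + (norm v')\<^sup>2"
    using assms by (simp add: norm_add_Pythagorean orthogonal_def)
  also have "\<dots> = (norm (x + v'))\<^sup>2"
    using assms by (simp add: norm_add_Pythagorean orthogonal_def)
  finally show ?thesis by simp
qed

definition capped_ball :: "real^'n \<Rightarrow> (real^'n) set" where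
  "capped_ball u = cball 0 1 \<inter> {x. u \<bullet> x \<le> 1/2}"

lemma convex_body_capped_ball:
  fixes u :: "real^'n"
  assumes "norm u = 1"
  shows "convex_body (capped_ball u)"
proof -
  have "ball 0 (1/2) \<subseteq> capped_ball u"
  proof
    fix x :: "real^'n" assume x: "x \<in> ball 0 (1/2)"
    then have "u \<bullet> x \<le> 1/2" using norm_cauchy_schwarz[of u x] assms by simp
    then show "x \<in> capped_ball u" using x by (simp add: capped_ball_def)
  qed
  then have "interior (capped_ball u) \<noteq> {}"
    using interior_maximal[of "ball 0 (1/2)" "capped_ball u"] by fastforce
  moreover have "compact (capped_ball u)"
    unfolding capped_ball_def by (rule compact_Int_closed[OF compact_cball closed_halfspace_le])
  moreover have "convex (capped_ball u)"
    unfolding capped_ball_def by (rule convex_Int[OF convex_cball convex_halfspace_le])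
  ultimately show ?thesis by (simp add: convex_body_def)
qed

lemma rot_symmetric_capped_ball:
  fixes u :: "real^'n"
  assumes "u \<in> H"
  shows "rot_symmetric H (capped_ball u)"
  unfolding rot_symmetric_iff
proof (intro ballI impI)
  fix x v v' assume x: "x \<in> H" and v: "v \<in> H\<^sup>\<bottom>" "v' \<in> H\<^sup>\<bottom>" "norm v = norm v'"
    and "v + x \<in> capped_ball u"
  have "norm (x + v) = norm (x + v')"
    using x v by (intro norm_add_orthogonal_eq) (auto simp: orthogonal_comp_def orthogonal_def)
  moreover have "u \<bullet> v = 0" "u \<bullet> v' = 0"
    using assms v by (auto simp: orthogonal_comp_def orthogonal_def)
  ultimately show "v' + x \<in> capped_ball u"
    using \<open>v + x \<in> capped_ball u\<close> by (simp add: capped_ball_def inner_add_right add.commute)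
qed

lemma capped_ball_neq_cball:
  fixes u :: "real^'n"
  assumes "norm u = 1"
  shows "capped_ball u \<noteq> cball 0 r"
proof
  assume r: "capped_ball u = cball 0 r"
  have "u \<bullet> u = 1" using assms by (simp add: dot_square_norm)
  then have "- u \<in> capped_ball u" using assms by (simp add: capped_ball_def)
  then have "u \<in> capped_ball u" using r by simp
  then show False using \<open>u \<bullet> u = 1\<close> by (simp add: capped_ball_def)
qed

lemma not_cball_if_not_spanning:
  fixes H :: "'i \<Rightarrow> (real^'n) set"
  assumes H: "\<And>j. j \<in> J \<Longrightarrow> subspace (H j)"
    and not_spanning: "span (\<Union>j\<in>J. (H j)\<^sup>\<bottom>) \<noteq> UNIV"
  obtains K where "convex_body K" "\<forall>j\<in>J. rot_symmetric (H j) K" "\<not> (\<exists>r>0. K = cball 0 r)"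
proof -
  have "dim (\<Union>j\<in>J. (H j)\<^sup>\<bottom>) < DIM(real^'n)"
    using not_spanning dim_eq_full dim_subset_UNIV le_neq_implies_less by blast
  then obtain u0 where u0: "u0 \<noteq> 0" "\<And>y. y \<in> span (\<Union>j\<in>J. (H j)\<^sup>\<bottom>) \<Longrightarrow> orthogonal u0 y"
    using orthogonal_to_subspace_exists by blast
  define u where "u = u0 /\<^sub>R norm u0"
  have u: "norm u = 1" using u0(1) by (simp add: u_def)
  have "u \<in> H j" if j: "j \<in> J" for j
  proof -
    have "orthogonal y u" if "y \<in> (H j)\<^sup>\<bottom>" for y
    proof -
      have "y \<in> span (\<Union>j\<in>J. (H j)\<^sup>\<bottom>)" using that j by (blast intro: span_base)
      then have "u0 \<bullet> y = 0" using u0(2) by (simp add: orthogonal_def)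
      then show ?thesis by (simp add: u_def orthogonal_def inner_commute)
    qed
    then have "u \<in> (H j)\<^sup>\<bottom>\<^sup>\<bottom>" by (simp add: orthogonal_comp_def)
    then show ?thesis using orthogonal_comp_self[OF H[OF j]] by simp
  qed
  then show thesis
    using that convex_body_capped_ball[OF u] rot_symmetric_capped_ball capped_ball_neq_cball[OF u]
    by blast
qed

lemma orthogonal_summand_exchange:
  fixes A :: "'a::real_inner set"
  assumes A: "subspace A" and sum: "v + x = a + b" "a \<in> A" "b \<in> A\<^sup>\<bottom>"
    and v: "v \<in> A" "v' \<in> A" "norm v = norm v'" and x: "x \<bullet> v = 0" "x \<bullet> v' = 0"
  obtains a' where "v' + x = a' + b" "a' \<in> A" "norm a' = norm a"
proof
  show "v' + x = (a - v + v') + b" using sum(1) by (simp add: algebra_simps)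
  show "a - v + v' \<in> A" using A sum(2) v(1,2) by (simp add: subspace_add subspace_diff)
  have "b \<bullet> v = 0" "b \<bullet> v' = 0"
    using sum(3) v(1,2) by (auto simp: orthogonal_comp_def orthogonal_def inner_commute)
  moreover have "a - v = x - b" using sum(1) by (simp add: algebra_simps)
  ultimately have "norm ((a - v) + v) = norm ((a - v) + v')"
    using x v(3) by (intro norm_add_orthogonal_eq) (simp_all add: inner_diff_left)
  then show "norm (a - v + v') = norm a" by simp
qed

definition orthogonal_sum_body :: "(real^'n) set \<Rightarrow> (real^'n) set" where
  "orthogonal_sum_body A = (\<Union>a\<in>A \<inter> cball 0 1. \<Union>b\<in>A\<^sup>\<bottom> \<inter> cball 0 2. {a + b})"

lemma mem_orthogonal_sum_body_iff:
  "z \<in> orthogonal_sum_body A \<longleftrightarrow>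
    (\<exists>a\<in>A. \<exists>b\<in>A\<^sup>\<bottom>. z = a + b \<and> norm a \<le> 1 \<and> norm b \<le> 2)"
  unfolding orthogonal_sum_body_def by (simp add: Bex_def) blast

lemma orthogonal_sum_body_add_mem:
  "a \<in> A \<Longrightarrow> b \<in> A\<^sup>\<bottom> \<Longrightarrow> norm a \<le> 1 \<Longrightarrow> norm b \<le> 2 \<Longrightarrow> a + b \<in> orthogonal_sum_body A"
  by (auto simp: mem_orthogonal_sum_body_iff)

lemma inner_orthogonal_comp: "a \<in> A \<Longrightarrow> b \<in> A\<^sup>\<bottom> \<Longrightarrow> a \<bullet> b = 0"
  by (simp add: orthogonal_comp_def orthogonal_def)

lemma convex_body_orthogonal_sum_body:
  fixes A :: "(real^'n) set"
  assumes A: "subspace A"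
  shows "convex_body (orthogonal_sum_body A)"
proof -
  have "compact (orthogonal_sum_body A)"
    unfolding orthogonal_sum_body_def using A subspace_orthogonal_comp
    by (intro compact_sums' closed_Int_compact closed_subspace compact_cball)
  moreover have "convex (orthogonal_sum_body A)"
    unfolding orthogonal_sum_body_def using A subspace_orthogonal_comp
    by (intro convex_sums convex_Int subspace_imp_convex convex_cball)
  moreover have "ball 0 1 \<subseteq> orthogonal_sum_body A"
  proof
    fix x :: "real^'n" assume x: "x \<in> ball 0 1"
    have "x \<in> A + A\<^sup>\<bottom>" using subspace_sum_orthogonal_comp[OF A] by simp
    then obtain a b where ab: "x = a + b" "a \<in> A" "b \<in> A\<^sup>\<bottom>" by (rule set_plus_elim)
    then have "(norm x)\<^sup>2 = (norm a)\<^sup>2 + (norm b)\<^sup>2"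
      by (simp add: norm_add_Pythagorean orthogonal_def inner_orthogonal_comp)
    then have "(norm a)\<^sup>2 \<le> (norm x)\<^sup>2" "(norm b)\<^sup>2 \<le> (norm x)\<^sup>2" by simp_all
    then have "norm a \<le> norm x" "norm b \<le> norm x"
      using power2_le_imp_le norm_ge_zero by blast+
    then show "x \<in> orthogonal_sum_body A"
      using x ab by (simp add: orthogonal_sum_body_add_mem)
  qed
  then have "interior (orthogonal_sum_body A) \<noteq> {}"
    using interior_maximal[of "ball 0 1" "orthogonal_sum_body A"] by fastforce
  ultimately show ?thesis by (simp add: convex_body_def)
qed

text \<open>The body is symmetric in \<open>A\<close> and \<open>A\<^sup>\<bottom>\<close> up to the radii, so both cases reduce to
  exchanging \<open>v\<close> for \<open>v'\<close> within one summand.\<close>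
lemma rot_symmetric_orthogonal_sum_body:
  fixes A H :: "(real^'n) set"
  assumes A: "subspace A" and H: "H\<^sup>\<bottom> \<subseteq> A \<or> H\<^sup>\<bottom> \<subseteq> A\<^sup>\<bottom>"
  shows "rot_symmetric H (orthogonal_sum_body A)"
  unfolding rot_symmetric_iff
proof (intro ballI impI)
  fix x v v' assume x: "x \<in> H" and v: "v \<in> H\<^sup>\<bottom>" "v' \<in> H\<^sup>\<bottom>" "norm v = norm v'"
    and "v + x \<in> orthogonal_sum_body A"
  then obtain a b where ab: "v + x = a + b" "a \<in> A" "b \<in> A\<^sup>\<bottom>" "norm a \<le> 1" "norm b \<le> 2"
    by (auto simp: mem_orthogonal_sum_body_iff)
  have xv: "x \<bullet> v = 0" "x \<bullet> v' = 0"
    using x v by (auto simp: orthogonal_comp_def orthogonal_def)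
  from H show "v' + x \<in> orthogonal_sum_body A"
  proof
    assume "H\<^sup>\<bottom> \<subseteq> A"
    then obtain a' where "v' + x = a' + b" "a' \<in> A" "norm a' = norm a"
      using orthogonal_summand_exchange[OF A ab(1-3) _ _ v(3) xv] v(1,2) by blast
    then show ?thesis using ab(3-5) by (simp add: orthogonal_sum_body_add_mem)
  next
    assume "H\<^sup>\<bottom> \<subseteq> A\<^sup>\<bottom>"
    moreover have "v + x = b + a" "a \<in> A\<^sup>\<bottom>\<^sup>\<bottom>"
      using ab(1,2) orthogonal_comp_self[OF A] by (simp_all add: add.commute)
    ultimately obtain b' where "v' + x = b' + a" "b' \<in> A\<^sup>\<bottom>" "norm b' = norm b"
      using orthogonal_summand_exchange[OF subspace_orthogonal_comp _ ab(3) _ _ _ v(3) xv] v(1,2)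
      by blast
    then show ?thesis using ab(2,4,5) by (simp add: orthogonal_sum_body_add_mem add.commute)
  qed
qed

lemma orthogonal_sum_body_neq_cball:
  fixes A :: "(real^'n) set"
  assumes A: "subspace A" "A \<noteq> {0}" "A\<^sup>\<bottom> \<noteq> {0}"
  shows "orthogonal_sum_body A \<noteq> cball 0 r"
proof
  assume r: "orthogonal_sum_body A = cball 0 r"
  obtain e e' where e: "e \<in> A" "e \<noteq> 0" and e': "e' \<in> A\<^sup>\<bottom>" "e' \<noteq> 0"
    using A subspace_0[OF A(1)] subspace_0[OF subspace_orthogonal_comp] by blast
  define u where "u = (2 / norm e) *\<^sub>R e"
  define u' where "u' = (2 / norm e') *\<^sub>R e'"
  have u: "u \<in> A" "norm u = 2" using e A(1) by (simp_all add: u_def subspace_scale)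
  have "u' \<in> A\<^sup>\<bottom>" "norm u' = 2"
    using e' by (simp_all add: u'_def subspace_scale subspace_orthogonal_comp)
  then have "u' \<in> orthogonal_sum_body A"
    using orthogonal_sum_body_add_mem[OF subspace_0[OF A(1)]] by simp
  then have "u \<in> orthogonal_sum_body A" using r u(2) \<open>norm u' = 2\<close> by simp
  then obtain a b where ab: "a \<in> A" "b \<in> A\<^sup>\<bottom>" "u = a + b" "norm a \<le> 1"
    by (auto simp: mem_orthogonal_sum_body_iff)
  then have "b \<in> A \<inter> A\<^sup>\<bottom>" using A(1) u(1) subspace_diff[of A u a] by simp
  then have "b = 0" using orthogonal_Int_0[OF A(1)] by blast
  then show False using ab u(2) by simp
qed

lemma not_cball_if_decomposable:
  fixes H :: "'i \<Rightarrow> (real^'n) set"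
  assumes H: "\<And>j. j \<in> J \<Longrightarrow> (H j)\<^sup>\<bottom> \<noteq> {0}"
    and decomposable: "orthogonally_decomposable J (\<lambda>j. (H j)\<^sup>\<bottom>)"
  obtains K where "convex_body K" "\<forall>j\<in>J. rot_symmetric (H j) K" "\<not> (\<exists>r>0. K = cball 0 r)"
proof -
  obtain I I' where II': "I \<union> I' = J" "I \<inter> I' = {}" "I \<noteq> {}" "I' \<noteq> {}"
    and orth: "\<forall>i\<in>I. \<forall>j\<in>I'. \<forall>u\<in>(H i)\<^sup>\<bottom>. \<forall>v\<in>(H j)\<^sup>\<bottom>. orthogonal u v"
    using decomposable unfolding orthogonally_decomposable_def by (elim exE conjE)
  define A where "A = span (\<Union>i\<in>I. (H i)\<^sup>\<bottom>)"
  have A: "subspace A" by (simp add: A_def)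
  have HA: "(H i)\<^sup>\<bottom> \<subseteq> A" if "i \<in> I" for i
    using that by (auto simp: A_def intro: span_base)
  have HA': "(H j)\<^sup>\<bottom> \<subseteq> A\<^sup>\<bottom>" if j: "j \<in> I'" for j
  proof
    fix v assume v: "v \<in> (H j)\<^sup>\<bottom>"
    have "orthogonal v a" if "a \<in> A" for a
    proof (rule orthogonal_to_span)
      show "a \<in> span (\<Union>i\<in>I. (H i)\<^sup>\<bottom>)" using that by (simp add: A_def)
      fix y assume "y \<in> (\<Union>i\<in>I. (H i)\<^sup>\<bottom>)"
      then obtain i where "i \<in> I" "y \<in> (H i)\<^sup>\<bottom>" by blast
      then have "orthogonal y v" using orth j v by blast
      then show "orthogonal v y" by (simp add: orthogonal_commute)
    qed
    then show "v \<in> A\<^sup>\<bottom>" by (simp add: orthogonal_comp_def orthogonal_commute)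
  qed
  obtain i j where "i \<in> I" "j \<in> I'" using II'(3,4) by blast
  then have "A \<noteq> {0}" "A\<^sup>\<bottom> \<noteq> {0}"
    using H II'(1) HA HA' subspace_0[OF subspace_orthogonal_comp] by blast+
  show thesis
  proof
    show "convex_body (orthogonal_sum_body A)" by (rule convex_body_orthogonal_sum_body[OF A])
    show "\<forall>j\<in>J. rot_symmetric (H j) (orthogonal_sum_body A)"
      using II'(1) HA HA' by (blast intro: rot_symmetric_orthogonal_sum_body[OF A])
    show "\<not> (\<exists>r>0. orthogonal_sum_body A = cball 0 r)"
      using orthogonal_sum_body_neq_cball[OF A \<open>A \<noteq> {0}\<close> \<open>A\<^sup>\<bottom> \<noteq> {0}\<close>] by blast
  qed
qed

lemma spanning_and_irreducible_if_balls:
  fixes H :: "'i \<Rightarrow> (real^'n) set"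
  assumes H: "\<And>j. j \<in> J \<Longrightarrow> subspace (H j)" "\<And>j. j \<in> J \<Longrightarrow> (H j)\<^sup>\<bottom> \<noteq> {0}"
    and balls: "symmetric_convex_bodies_balls J H"
  shows "span (\<Union>j\<in>J. (H j)\<^sup>\<bottom>) = UNIV \<and> \<not> orthogonally_decomposable J (\<lambda>j. (H j)\<^sup>\<bottom>)"
proof
  show "span (\<Union>j\<in>J. (H j)\<^sup>\<bottom>) = UNIV"
  proof (rule ccontr)
    assume not_spanning: "span (\<Union>j\<in>J. (H j)\<^sup>\<bottom>) \<noteq> UNIV"
    obtain K where "convex_body K" "\<forall>j\<in>J. rot_symmetric (H j) K" "\<not> (\<exists>r>0. K = cball 0 r)"
      by (rule not_cball_if_not_spanning[OF H(1) not_spanning])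
    then show False using balls unfolding symmetric_convex_bodies_balls_def by blast
  qed
  show "\<not> orthogonally_decomposable J (\<lambda>j. (H j)\<^sup>\<bottom>)"
  proof
    assume decomposable: "orthogonally_decomposable J (\<lambda>j. (H j)\<^sup>\<bottom>)"
    obtain K where "convex_body K" "\<forall>j\<in>J. rot_symmetric (H j) K" "\<not> (\<exists>r>0. K = cball 0 r)"
      by (rule not_cball_if_decomposable[OF H(2) decomposable])
    then show False using balls unfolding symmetric_convex_bodies_balls_def by blast
  qed
qed

theorem theorem4p1:
  fixes H :: "nat \<Rightarrow> (real^'n) set" and k :: nat
  assumes sub: "\<And>j. j \<in> {1..k} \<Longrightarrow> subspace (H j)"
    and dims: "\<And>j. j \<in> {1..k} \<Longrightarrow> 1 \<le> dim (H j) \<and> dim (H j) \<le> CARD('n) - 2"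
  defines "P1 \<equiv> span (\<Union>j\<in>{1..k}. orthogonal_comp (H j)) = UNIV \<and>
              \<not> (\<exists>I J. I \<union> J = {1..k} \<and> I \<inter> J = {} \<and> I \<noteq> {} \<and> J \<noteq> {} \<and>
                    (\<forall>i\<in>I. \<forall>j\<in>J. orthogonal_subspaces (orthogonal_comp (H i)) (orthogonal_comp (H j))))"
    and "P2 \<equiv> \<forall>E. E \<subseteq> sphere 0 1 \<and> E \<noteq> {} \<and> closed E \<and>
              (\<forall>j\<in>{1..k}. \<forall>x\<in>E. sphere 0 1 \<inter> ((\<lambda>y. y + x) ` orthogonal_comp (H j)) \<subseteq> E)
              \<longrightarrow> E = sphere 0 1"
    and "P3 \<equiv> \<forall>F. closed F \<and> (\<forall>j\<in>{1..k}. \<forall>f. rotation_fixing (H j) f \<longrightarrow> f ` F = F)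
              \<longrightarrow> (\<exists>R::real set. F = (\<Union>r\<in>R. sphere 0 r))"
    and "P4 \<equiv> \<forall>K. convex_body K \<and> (\<forall>j\<in>{1..k}. rot_symmetric (H j) K)
              \<longrightarrow> (\<exists>r>0. K = cball 0 r)"
  shows "(P1 \<longleftrightarrow> P2) \<and> (P2 \<longleftrightarrow> P3) \<and> (P3 \<longleftrightarrow> P4)"
proof -
  let ?V = "\<lambda>j. (H j)\<^sup>\<bottom>"
  txt \<open>The lower bound \<open>1 \<le> dim (H j)\<close> only keeps \<open>CARD('n) - 2\<close> from truncating.\<close>
  have dim_perp: "2 \<le> dim (?V j)" if "j \<in> {1..k}" for j
    using dims[OF that] dim_orthogonal_comp[OF sub[OF that]] by simp linarith
  then have nonzero_perp: "?V j \<noteq> {0}" if "j \<in> {1..k}" for j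
    using that dim_eq_0[of "?V j"] by fastforce
  have P1_iff: "P1 \<longleftrightarrow> span (\<Union>j\<in>{1..k}. ?V j) = UNIV \<and> \<not> orthogonally_decomposable {1..k} ?V"
    by (simp add: assms(3) orthogonally_decomposable_def orthogonal_subspaces_def)
  have P2_iff: "P2 \<longleftrightarrow> saturated_sphere_subsets_trivial {1..k} ?V"
    by (simp add: assms(4) saturated_sphere_subsets_trivial_def)
  have P3_iff: "P3 \<longleftrightarrow> invariant_closed_sets_radial {1..k} H"
    by (simp add: assms(5) invariant_closed_sets_radial_def)
  have P4_iff: "P4 \<longleftrightarrow> symmetric_convex_bodies_balls {1..k} H"
    by (simp add: assms(6) symmetric_convex_bodies_balls_def)
  have "span (\<Union>j\<in>{1..k}. ?V j) = UNIV \<Longrightarrow> \<not> orthogonally_decomposable {1..k} ?V \<Longrightarrow>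
      saturated_sphere_subsets_trivial {1..k} ?V"
    by (rule saturated_sphere_subsets_trivial_if_irreducible)
      (simp_all add: subspace_orthogonal_comp dim_perp)
  moreover have "saturated_sphere_subsets_trivial {1..k} ?V \<Longrightarrow> invariant_closed_sets_radial {1..k} H"
    by (rule invariant_closed_sets_radial_if_saturated_trivial[OF dim_perp])
  moreover have "invariant_closed_sets_radial {1..k} H \<Longrightarrow> symmetric_convex_bodies_balls {1..k} H"
    by (rule symmetric_convex_bodies_balls_if_radial[OF sub])
  moreover have "symmetric_convex_bodies_balls {1..k} H \<Longrightarrow>
      span (\<Union>j\<in>{1..k}. ?V j) = UNIV \<and> \<not> orthogonally_decomposable {1..k} ?V"
    by (rule spanning_and_irreducible_if_balls[OF sub nonzero_perp])
  ultimately show ?thesis unfolding P1_iff P2_iff P3_iff P4_iff by blast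
qed

end
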